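(* For $\theta=(\theta_1,\ldots,\theta_n)$ and $1\le i<n$ one has \[ G_{\ldots,\theta_i,\theta_{i+1},\ldots}(x|t) = -\beta\, G_{\ldots,\theta_i+1,\theta_{i+1},\ldots}(x|t) - \frac{1+\beta t_{n+\theta_i-i+1}}{1+\beta t_{n+\theta_{i+1}-i}}\Big(G_{\ldots,\theta_{i+1}-1,\theta_i+1,\ldots}(x|t)+\beta\, G_{\ldots,\theta_{i+1},\theta_i+1,\ldots}(x|t)\Big), \] where only the $i$-th and $(i+1)$-th entries of the index are changed.
   Context: Let $\beta$ be a parameter, $x=(x_1,\ldots,x_n)$ variables and $t=(t_1,t_2,\ldots)$ equivariant parameters. Write $x\oplus y=x+y+\beta xy$ and define the $\beta$-deformed factorial power $(x|t)^r=\prod_{i=1}^r (x\oplus t_i)$. For a sequence $\theta=(\theta_1,\ldots,\theta_n)$ (a partition or, more generally, a sequence of integers for which the powers below make sense), the factorial Grothendieck polynomial is given by the determinant formula (Ikeda–Naruse) \[ G_\theta(x|t)=\frac{\det\big[(x_j|t)^{\theta_i+n-i}(1+\beta x_j)^{i-1}\big]_{1\le i,j\le n}}{\det\big[x_j^{n-i}\big]_{1\le i,j\le n}}, \] the denominator being the Vandermonde determinant $\prod_{i<j}(x_i-x_j)$; this determinant formula is used to define $G_\theta$ for non-partition indices $\theta$ appearing in the statement. *)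

theory Defs
  imports "Jordan_Normal_Form.Determinant"
begin

definition boplus :: "'a::field \<Rightarrow> 'a \<Rightarrow> 'a \<Rightarrow> 'a" where
  "boplus \<beta> a b = a + b + \<beta> * a * b"

definition fpow :: "'a::field \<Rightarrow> (nat \<Rightarrow> 'a) \<Rightarrow> nat \<Rightarrow> 'a \<Rightarrow> 'a" where
  "fpow \<beta> t r y = (\<Prod>k=1..r. boplus \<beta> y (t k))"

text \<open>Factorial Grothendieck polynomial via the Ikeda--Naruse determinant formula.
  Matrix rows/columns are 0-based in the library: row i, column j correspond to i+1, j+1.\<close>
definition grothG :: "'a::field \<Rightarrow> (nat \<Rightarrow> 'a) \<Rightarrow> nat \<Rightarrow> (nat \<Rightarrow> 'a) \<Rightarrow> (nat \<Rightarrow> int) \<Rightarrow> 'a" where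
  "grothG \<beta> t n x \<theta> =
     det (mat n n (\<lambda>(i, j). fpow \<beta> t (nat (\<theta> (i + 1) + int n - int (i + 1))) (x (j + 1))
                              * (1 + \<beta> * x (j + 1)) ^ i))
     / det (mat n n (\<lambda>(i, j). x (j + 1) ^ (n - (i + 1))))"

end

theory Submission
  imports Defs
begin

text \<open>Both determinants in the Ikeda--Naruse formula are alternants \<open>det [f\<^sub>r(x\<^sub>j)]\<close>, so
  the relation only concerns rows \<open>i\<close> and \<open>i+1\<close>.  Put \<open>a = \<theta>\<^sub>i + n - i\<close>, \<open>b = \<theta>\<^sub>i\<^sub>+\<^sub>1 + n - i - 1\<close>
  and \<open>w = 1 + \<beta>y\<close>.  By \<open>(y|t)\<^sup>a + \<beta> (y|t)\<^sup>a\<^sup>+\<^sup>1 = (1 + \<beta> t\<^sub>a\<^sub>+\<^sub>1) (y|t)\<^sup>a w\<close> and linearity in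
  row \<open>i\<close>, the two terms on the left contract to \<open>(1 + \<beta> t\<^sub>a\<^sub>+\<^sub>1)\<close> times the alternant with rows
  \<open>(y|t)\<^sup>a w\<^sup>i, (y|t)\<^sup>b w\<^sup>i\<close>, and the pair in parentheses contracts to \<open>(1 + \<beta> t\<^sub>b\<^sub>+\<^sub>1)\<close> times
  the same alternant with these two rows exchanged, i.e. to minus it.\<close>

definition alternant :: "nat \<Rightarrow> (nat \<Rightarrow> 'a::comm_ring_1) \<Rightarrow> (nat \<Rightarrow> 'a \<Rightarrow> 'a) \<Rightarrow> 'a" where
  "alternant n x f = det (mat n n (\<lambda>(r, j). f r (x (j + 1))))"

lemma alternant_eq_sum_permutes:
  "alternant n x f =
     (\<Sum>p | p permutes {0..<n}. signof p * (\<Prod>r = 0..<n. f r (x (p r + 1))))"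
  unfolding alternant_def
proof (subst det_def'[of _ n], simp, intro sum.cong refl arg_cong[where f="\<lambda>z. _ * z"] prod.cong)
  fix p r assume "p \<in> {p. p permutes {0..<n}}" "r \<in> {0..<n}"
  then show "mat n n (\<lambda>(r, j). f r (x (j + 1))) $$ (r, p r) = f r (x (p r + 1))"
    using permutes_in_image[of p "{0..<n}" r] by simp
qed

lemma alternant_row_linear:
  assumes "k < n"
  shows "alternant n x (f(k := \<lambda>y. a * g y + b * h y)) =
           a * alternant n x (f(k := g)) + b * alternant n x (f(k := h))"
proof -
  have split_row: "(\<Prod>r = 0..<n. (f(k := u)) r (x (p r + 1))) =
                     u (x (p k + 1)) * (\<Prod>r \<in> {0..<n} - {k}. f r (x (p r + 1)))" for p u
  proof -
    have "(\<Prod>r = 0..<n. (f(k := u)) r (x (p r + 1))) =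
            u (x (p k + 1)) * (\<Prod>r \<in> {0..<n} - {k}. (f(k := u)) r (x (p r + 1)))"
      using assms by (subst prod.remove[of _ k]) auto
    also have "(\<Prod>r \<in> {0..<n} - {k}. (f(k := u)) r (x (p r + 1))) =
                 (\<Prod>r \<in> {0..<n} - {k}. f r (x (p r + 1)))"
      by (rule prod.cong) auto
    finally show ?thesis .
  qed
  show ?thesis
    unfolding alternant_eq_sum_permutes split_row
    by (simp add: sum_distrib_left sum.distrib[symmetric] algebra_simps)
qed

lemma alternant_swap_rows:
  assumes "k < n" "l < n" "k \<noteq> l"
  shows "alternant n x (f(k := g, l := h)) = - alternant n x (f(k := h, l := g))"
proof -
  let ?M = "\<lambda>f. mat n n (\<lambda>(r, j). f r (x (j + 1)))"
  have "?M (f(k := g, l := h)) = swaprows k l (?M (f(k := h, l := g)))"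
    by (rule eq_matI) (use assms in auto)
  then show ?thesis
    unfolding alternant_def using assms by (simp add: det_swaprows)
qed

lemma fpow_Suc: "fpow \<beta> t (Suc a) y = fpow \<beta> t a y * boplus \<beta> y (t (Suc a))"
  unfolding fpow_def by (simp add: prod.nat_ivl_Suc')

lemma fpow_add_beta_fpow_Suc:
  "fpow \<beta> t a y + \<beta> * fpow \<beta> t (Suc a) y =
     (1 + \<beta> * t (Suc a)) * (fpow \<beta> t a y * (1 + \<beta> * y))"
  unfolding fpow_Suc boplus_def by (simp add: algebra_simps)

definition fact_row :: "'a::field \<Rightarrow> (nat \<Rightarrow> 'a) \<Rightarrow> (nat \<Rightarrow> nat) \<Rightarrow> nat \<Rightarrow> 'a \<Rightarrow> 'a" where
  "fact_row \<beta> t e r y = fpow \<beta> t (e r) y * (1 + \<beta> * y) ^ r"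

definition shifted_index :: "nat \<Rightarrow> (nat \<Rightarrow> int) \<Rightarrow> nat \<Rightarrow> nat" where
  "shifted_index n \<theta> r = nat (\<theta> (r + 1) + int n - int (r + 1))"

lemma grothG_eq_alternant_quotient:
  "grothG \<beta> t n x \<theta> =
     alternant n x (fact_row \<beta> t (shifted_index n \<theta>)) / alternant n x (\<lambda>r y. y ^ (n - (r + 1)))"
  unfolding grothG_def alternant_def fact_row_def shifted_index_def by simp

lemma fact_row_update:
  "fact_row \<beta> t (e(k := m)) = (fact_row \<beta> t e)(k := \<lambda>y. fpow \<beta> t m y * (1 + \<beta> * y) ^ k)"
  unfolding fact_row_def by auto

lemma alternant_fpow_contract:
  assumes "k < n"
  shows "alternant n x (f(k := \<lambda>y. fpow \<beta> t a y * (1 + \<beta> * y) ^ k))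
           + \<beta> * alternant n x (f(k := \<lambda>y. fpow \<beta> t (Suc a) y * (1 + \<beta> * y) ^ k))
         = (1 + \<beta> * t (Suc a)) * alternant n x (f(k := \<lambda>y. fpow \<beta> t a y * (1 + \<beta> * y) ^ Suc k))"
    (is "?lhs = ?c * alternant n x (f(k := ?g))")
proof -
  have "?lhs = alternant n x (f(k := \<lambda>y. 1 * (fpow \<beta> t a y * (1 + \<beta> * y) ^ k)
                                      + \<beta> * (fpow \<beta> t (Suc a) y * (1 + \<beta> * y) ^ k)))"
    using assms by (simp only: alternant_row_linear) simp
  also have "\<dots> = alternant n x (f(k := \<lambda>y. ?c * ?g y + 0 * ?g y))"
  proof -
    have "1 * (fpow \<beta> t a y * (1 + \<beta> * y) ^ k) + \<beta> * (fpow \<beta> t (Suc a) y * (1 + \<beta> * y) ^ k)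
            = (fpow \<beta> t a y + \<beta> * fpow \<beta> t (Suc a) y) * (1 + \<beta> * y) ^ k" for y
      by (simp add: algebra_simps)
    then show ?thesis
      by (simp add: fpow_add_beta_fpow_Suc ac_simps)
  qed
  also have "\<dots> = ?c * alternant n x (f(k := ?g))"
    using assms by (simp only: alternant_row_linear) simp
  finally show ?thesis .
qed

lemma alternant_exchange_relation:
  fixes e :: "nat \<Rightarrow> nat"
  assumes "Suc k < n"
  defines "a \<equiv> e k" and "b \<equiv> e (Suc k)"
  shows "(1 + \<beta> * t (Suc b)) *
           (alternant n x (fact_row \<beta> t e) + \<beta> * alternant n x (fact_row \<beta> t (e(k := Suc a))))
       = - (1 + \<beta> * t (Suc a)) *
           (alternant n x (fact_row \<beta> t (e(k := b, Suc k := a)))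
            + \<beta> * alternant n x (fact_row \<beta> t (e(k := Suc b, Suc k := a))))"
proof -
  let ?R = "fact_row \<beta> t e"
  let ?row = "\<lambda>m r y. fpow \<beta> t m y * (1 + \<beta> * y) ^ r"
  define E where "E = alternant n x (?R(k := ?row a (Suc k)))"
  have k: "k < n" using assms(1) by simp
  have R_k: "?R = ?R(k := ?row a k)" and R_Suc_k: "?R(Suc k := ?row b (Suc k)) = ?R"
    by (auto simp: fun_eq_iff fact_row_def a_def b_def)
  have left: "alternant n x ?R + \<beta> * alternant n x (fact_row \<beta> t (e(k := Suc a)))
                = (1 + \<beta> * t (Suc a)) * E"
    unfolding E_def fact_row_update
    using alternant_fpow_contract[OF k, of x "fact_row \<beta> t e" \<beta> t a] by (simp only: R_k[symmetric])
  have swapped: "alternant n x ((?R(Suc k := ?row a (Suc k)))(k := ?row b (Suc k))) = - E"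
  proof -
    have "alternant n x ((?R(Suc k := ?row a (Suc k)))(k := ?row b (Suc k)))
            = alternant n x (?R(k := ?row b (Suc k), Suc k := ?row a (Suc k)))"
      by (simp only: fun_upd_twist[OF Suc_n_not_n])
    also have "\<dots> = - alternant n x (?R(k := ?row a (Suc k), Suc k := ?row b (Suc k)))"
      using k assms(1) by (rule alternant_swap_rows) simp
    also have "?R(k := ?row a (Suc k), Suc k := ?row b (Suc k)) = ?R(k := ?row a (Suc k))"
      by (subst fun_upd_twist[OF n_not_Suc_n]) (simp only: R_Suc_k)
    finally show ?thesis
      unfolding E_def .
  qed
  have right: "alternant n x (fact_row \<beta> t (e(k := b, Suc k := a)))
                 + \<beta> * alternant n x (fact_row \<beta> t (e(k := Suc b, Suc k := a)))
               = - ((1 + \<beta> * t (Suc b)) * E)"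
    unfolding fact_row_update fun_upd_twist[OF n_not_Suc_n] alternant_fpow_contract[OF k] swapped
    by simp
  show ?thesis
    unfolding left right by (simp add: algebra_simps)
qed

lemma divide_linear_relation:
  fixes c d \<beta> A\<^sub>0 A\<^sub>1 A\<^sub>2 A\<^sub>3 V :: "'a::field"
  assumes "c \<noteq> 0" and "c * (A\<^sub>0 + \<beta> * A\<^sub>1) = - d * (A\<^sub>2 + \<beta> * A\<^sub>3)"
  shows "A\<^sub>0 / V = - \<beta> * (A\<^sub>1 / V) - d / c * (A\<^sub>2 / V + \<beta> * (A\<^sub>3 / V))"
proof -
  have relation: "A\<^sub>0 + \<beta> * A\<^sub>1 = - d / c * (A\<^sub>2 + \<beta> * A\<^sub>3)"
    using assms by (metis mult_minus_left nonzero_mult_div_cancel_left times_divide_eq_left)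
  have "A\<^sub>0 / V = - \<beta> * (A\<^sub>1 / V) + (A\<^sub>0 + \<beta> * A\<^sub>1) / V"
    by (simp add: add_divide_distrib)
  also have "\<dots> = - \<beta> * (A\<^sub>1 / V) - d / c * (A\<^sub>2 / V + \<beta> * (A\<^sub>3 / V))"
    unfolding relation by (simp add: add_divide_distrib[symmetric] mult.assoc)
  finally show ?thesis .
qed

theorem mainTheorem6:
  fixes \<beta> :: "'a::field" and t x :: "nat \<Rightarrow> 'a" and \<theta> :: "nat \<Rightarrow> int" and n i :: nat
  assumes "1 \<le> i" and "i < n"
    and "\<forall>k \<in> {1..n}. \<theta> k + int n - int k \<ge> 0"
    and "1 + \<beta> * t (nat (int n + \<theta> (i + 1) - int i)) \<noteq> 0"
  shows "grothG \<beta> t n x \<theta> =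
     - \<beta> * grothG \<beta> t n x (\<theta>(i := \<theta> i + 1))
     - (1 + \<beta> * t (nat (int n + \<theta> i - int i + 1))) / (1 + \<beta> * t (nat (int n + \<theta> (i + 1) - int i)))
       * (grothG \<beta> t n x (\<theta>(i := \<theta> (i + 1) - 1, i + 1 := \<theta> i + 1))
          + \<beta> * grothG \<beta> t n x (\<theta>(i := \<theta> (i + 1), i + 1 := \<theta> i + 1)))"
proof -
  obtain k where i: "i = Suc k" using assms(1) by (cases i) auto
  define e where "e = shifted_index n \<theta>"
  have nonneg: "\<theta> i + int n - int i \<ge> 0" "\<theta> (i + 1) + int n - int (i + 1) \<ge> 0"
    using assms(1,2) assms(3)[rule_format, of i] assms(3)[rule_format, of "i + 1"] by auto
  have raise: "shifted_index n (\<theta>(i := \<theta> i + 1)) = e(k := Suc (e k))"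
    using nonneg(1)
    by (auto simp: fun_eq_iff e_def shifted_index_def i Suc_nat_eq_nat_zadd1 algebra_simps)
  have exchange:
    "shifted_index n (\<theta>(i := \<theta> (i + 1) - 1, i + 1 := \<theta> i + 1)) = e(k := e i, i := e k)"
    by (auto simp: fun_eq_iff e_def shifted_index_def i algebra_simps)
  have exchange_raise:
    "shifted_index n (\<theta>(i := \<theta> (i + 1), i + 1 := \<theta> i + 1)) = e(k := Suc (e i), i := e k)"
    using nonneg(2)
    by (auto simp: fun_eq_iff e_def shifted_index_def i Suc_nat_eq_nat_zadd1 algebra_simps)
  have t_a: "nat (int n + \<theta> i - int i + 1) = Suc (e k)"
    using nonneg(1) by (simp add: e_def shifted_index_def i Suc_nat_eq_nat_zadd1 algebra_simps)
  have t_b: "nat (int n + \<theta> (i + 1) - int i) = Suc (e i)"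
    using nonneg(2) by (simp add: e_def shifted_index_def Suc_nat_eq_nat_zadd1 algebra_simps)
  note relation = alternant_exchange_relation[OF assms(2)[unfolded i],
      where e=e and \<beta>=\<beta> and t=t and x=x, folded i]
  show ?thesis
    unfolding grothG_eq_alternant_quotient raise exchange exchange_raise t_a t_b e_def[symmetric]
    using assms(4)[unfolded t_b] relation by (rule divide_linear_relation)
qed

end
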